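(* Let $M$ be a $po$-$\Gamma$-semigroup. The following are equivalent: (1) $M$ is completely regular. (2) $B(a)=B(a\Gamma a)=B(a\Gamma a\Gamma M\Gamma a\Gamma a)$ for every $a\in M$. (3) $B(a)=B(a\Gamma a)$ for every $a\in M$.
   Context: A $po$-$\Gamma$-semigroup is a triple $(M,\Gamma,\le)$ where $M,\Gamma$ are nonempty sets with a map $M\times\Gamma\times M\to M$, $(a,\gamma,b)\mapsto a\gamma b$, satisfying $(a\gamma b)\mu c=a\gamma(b\mu c)$ for all $a,b,c\in M$, $\gamma,\mu\in\Gamma$, and $\le$ is a partial order on $M$ such that $a\le b$ implies $a\gamma c\le b\gamma c$ and $c\gamma a\le c\gamma b$ for all $c\in M$, $\gamma\in\Gamma$. For $A,B\subseteq M$, $A\Gamma B=\{a\gamma b: a\in A,\gamma\in\Gamma,b\in B\}$ (with $a\Gamma B$ meaning $\{a\}\Gamma B$, etc.), and $(A]=\{t\in M: t\le a \text{ for some } a\in A\}$. $M$ is regular if $a\in(a\Gamma M\Gamma a]$ for all $a\in M$; left regular if $a\in(M\Gamma a\Gamma a]$ for all $a\in M$; right regular if $a\in(a\Gamma a\Gamma M]$ for all $a\in M$; completely regular if it is regular, left regular and right regular. A bi-ideal of $M$ is a nonempty subset $B\subseteq M$ such that $B\Gamma M\Gamma B\subseteq B$ and, whenever $a\in B$, $b\in M$ and $b\le a$, then $b\in B$. For a nonempty subset $A\subseteq M$, $B(A)$ denotes the bi-ideal of $M$ generated by $A$ (the smallest bi-ideal containing $A$), and $B(A)=(A\cup A\Gamma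 M\Gamma A]$; $B(a)$ means $B(\{a\})=(\{a\}\cup a\Gamma M\Gamma a]$. *)

theory Defs
  imports Main
begin

definition po_gamma_semigroup ::
  "'a set \<Rightarrow> 'g set \<Rightarrow> ('a \<Rightarrow> 'g \<Rightarrow> 'a \<Rightarrow> 'a) \<Rightarrow> ('a \<Rightarrow> 'a \<Rightarrow> bool) \<Rightarrow> bool" where
  "po_gamma_semigroup M G mult le \<longleftrightarrow>
     M \<noteq> {} \<and> G \<noteq> {} \<and>
     (\<forall>a\<in>M. \<forall>g\<in>G. \<forall>b\<in>M. mult a g b \<in> M) \<and>
     (\<forall>a\<in>M. \<forall>b\<in>M. \<forall>c\<in>M. \<forall>g\<in>G. \<forall>m\<in>G.
        mult (mult a g b) m c = mult a g (mult b m c)) \<and>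
     (\<forall>a\<in>M. le a a) \<and>
     (\<forall>a\<in>M. \<forall>b\<in>M. le a b \<and> le b a \<longrightarrow> a = b) \<and>
     (\<forall>a\<in>M. \<forall>b\<in>M. \<forall>c\<in>M. le a b \<and> le b c \<longrightarrow> le a c) \<and>
     (\<forall>a\<in>M. \<forall>b\<in>M. \<forall>c\<in>M. \<forall>g\<in>G. le a b \<longrightarrow>
        le (mult a g c) (mult b g c) \<and> le (mult c g a) (mult c g b))"

definition gprod ::
  "'g set \<Rightarrow> ('a \<Rightarrow> 'g \<Rightarrow> 'a \<Rightarrow> 'a) \<Rightarrow> 'a set \<Rightarrow> 'a set \<Rightarrow> 'a set" where
  "gprod G mult A B = {mult a g b | a g b. a \<in> A \<and> g \<in> G \<and> b \<in> B}"

definition down :: "'a set \<Rightarrow> ('a \<Rightarrow> 'a \<Rightarrow> bool) \<Rightarrow> 'a set \<Rightarrow> 'a set" where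
  "down M le A = {t \<in> M. \<exists>a\<in>A. le t a}"

definition regular where
  "regular M G mult le \<longleftrightarrow>
     (\<forall>a\<in>M. a \<in> down M le (gprod G mult (gprod G mult {a} M) {a}))"

definition left_regular where
  "left_regular M G mult le \<longleftrightarrow>
     (\<forall>a\<in>M. a \<in> down M le (gprod G mult (gprod G mult M {a}) {a}))"

definition right_regular where
  "right_regular M G mult le \<longleftrightarrow>
     (\<forall>a\<in>M. a \<in> down M le (gprod G mult (gprod G mult {a} {a}) M))"

definition completely_regular where
  "completely_regular M G mult le \<longleftrightarrow>
     regular M G mult le \<and> left_regular M G mult le \<and> right_regular M G mult le"

definition bi_ideal where
  "bi_ideal M G mult le B \<longleftrightarrow>
     B \<noteq> {} \<and> B \<subseteq> M \<and>
     gprod G mult (gprod G mult B M) B \<subseteq> B \<and>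
     (\<forall>a\<in>B. \<forall>b\<in>M. le b a \<longrightarrow> b \<in> B)"

definition bi_ideal_gen where
  "bi_ideal_gen M G mult le A = \<Inter>{B. bi_ideal M G mult le B \<and> A \<subseteq> B}"

end

theory Submission
  imports Defs
begin

text \<open>
  The generated bi-ideal is \<open>B(A) = (A \<union> A\<Gamma>M\<Gamma>A]\<close>.
  If \<open>a\<close> is regular, left and right regular, say \<open>a \<le> a\<gamma>x\<gamma>'a\<close>, \<open>a \<le> y\<mu>a\<mu>'a\<close>
  and \<open>a \<le> a\<nu>a\<nu>'z\<close>, then substituting the last two into the outer factors of the first
  puts \<open>a\<close> below an element of \<open>a\<Gamma>a\<Gamma>M\<Gamma>a\<Gamma>a\<close>; together with
  \<open>a\<Gamma>a\<Gamma>M\<Gamma>a\<Gamma>a \<subseteq> B(a\<Gamma>a)\<close> and \<open>a\<gamma>a \<le> a\<gamma>x\<gamma>'a\<gamma>a\<close> this gives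
  \<open>B(a) \<subseteq> B(a\<Gamma>a\<Gamma>M\<Gamma>a\<Gamma>a) \<subseteq> B(a\<Gamma>a) \<subseteq> B(a)\<close>.
  Conversely, \<open>a \<in> B(a\<Gamma>a)\<close> puts \<open>a\<close> below some \<open>a\<gamma>a\<close>, hence below \<open>a\<gamma>a\<gamma>a\<close>, or
  below some \<open>a\<gamma>a\<mu>m\<mu>'a\<gamma>'a\<close>; either element can be bracketed as a member of
  \<open>a\<Gamma>M\<Gamma>a\<close>, \<open>M\<Gamma>a\<Gamma>a\<close> and \<open>a\<Gamma>a\<Gamma>M\<close>.
\<close>

lemma mem_gprod:
  "x \<in> gprod G mult A B \<longleftrightarrow> (\<exists>a\<in>A. \<exists>g\<in>G. \<exists>b\<in>B. x = mult a g b)"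
  unfolding gprod_def by blast

lemma mem_down: "x \<in> down M le A \<longleftrightarrow> x \<in> M \<and> (\<exists>a\<in>A. le x a)"
  unfolding down_def by blast

lemma gprod_mono: "A \<subseteq> A' \<Longrightarrow> B \<subseteq> B' \<Longrightarrow> gprod G mult A B \<subseteq> gprod G mult A' B'"
  unfolding gprod_def by blast

lemma gprod_Un_left: "gprod G mult (A \<union> A') B = gprod G mult A B \<union> gprod G mult A' B"
  unfolding gprod_def by blast

lemma gprod_Un_right: "gprod G mult A (B \<union> B') = gprod G mult A B \<union> gprod G mult A B'"
  unfolding gprod_def by blast

lemma down_mono: "A \<subseteq> A' \<Longrightarrow> down M le A \<subseteq> down M le A'"
  unfolding down_def by blast

lemma mem_down_gprod_gprod:
  "x \<in> down M le (gprod G mult (gprod G mult A B) C) \<longleftrightarrow>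
     x \<in> M \<and> (\<exists>a\<in>A. \<exists>g\<in>G. \<exists>b\<in>B. \<exists>h\<in>G. \<exists>c\<in>C. le x (mult (mult a g b) h c))"
  unfolding down_def gprod_def by blast

lemma bi_ideal_gen_least:
  "bi_ideal M G mult le B \<Longrightarrow> A \<subseteq> B \<Longrightarrow> bi_ideal_gen M G mult le A \<subseteq> B"
  unfolding bi_ideal_gen_def by blast

lemma subset_bi_ideal_gen: "A \<subseteq> bi_ideal_gen M G mult le A"
  unfolding bi_ideal_gen_def by blast

locale po_gamma_semigroup_on =
  fixes M :: "'a set" and G :: "'g set" and mult :: "'a \<Rightarrow> 'g \<Rightarrow> 'a \<Rightarrow> 'a"
    and le :: "'a \<Rightarrow> 'a \<Rightarrow> bool"
  assumes po_gamma_semigroup: "po_gamma_semigroup M G mult le"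
begin

abbreviation gmult :: "'a set \<Rightarrow> 'a set \<Rightarrow> 'a set" (infixl "\<cdot>" 70)
  where "A \<cdot> B \<equiv> gprod G mult A B"

abbreviation down_closure :: "'a set \<Rightarrow> 'a set" ("'(_']")
  where "(A] \<equiv> down M le A"

abbreviation \<B> :: "'a set \<Rightarrow> 'a set"
  where "\<B> A \<equiv> bi_ideal_gen M G mult le A"

lemma G_nonempty: "G \<noteq> {}"
  using po_gamma_semigroup unfolding po_gamma_semigroup_def by auto

lemma mult_closed [simp]: "a \<in> M \<Longrightarrow> g \<in> G \<Longrightarrow> b \<in> M \<Longrightarrow> mult a g b \<in> M"
  using po_gamma_semigroup unfolding po_gamma_semigroup_def by auto

lemma mult_assoc [simp]:
  "a \<in> M \<Longrightarrow> b \<in> M \<Longrightarrow> c \<in> M \<Longrightarrow> g \<in> G \<Longrightarrow> h \<in> G \<Longrightarrow>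
     mult (mult a g b) h c = mult a g (mult b h c)"
  using po_gamma_semigroup unfolding po_gamma_semigroup_def by auto

lemma refl_le: "a \<in> M \<Longrightarrow> le a a"
  using po_gamma_semigroup unfolding po_gamma_semigroup_def by blast

lemma trans_le: "le a b \<Longrightarrow> le b c \<Longrightarrow> a \<in> M \<Longrightarrow> b \<in> M \<Longrightarrow> c \<in> M \<Longrightarrow> le a c"
  using po_gamma_semigroup unfolding po_gamma_semigroup_def by blast

lemma mult_mono_left:
  "le a b \<Longrightarrow> a \<in> M \<Longrightarrow> b \<in> M \<Longrightarrow> c \<in> M \<Longrightarrow> g \<in> G \<Longrightarrow> le (mult a g c) (mult b g c)"
  using po_gamma_semigroup unfolding po_gamma_semigroup_def by blast

lemma mult_mono_right:
  "le a b \<Longrightarrow> a \<in> M \<Longrightarrow> b \<in> M \<Longrightarrow> c \<in> M \<Longrightarrow> g \<in> G \<Longrightarrow> le (mult c g a) (mult c g b)"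
  using po_gamma_semigroup unfolding po_gamma_semigroup_def by blast

lemma mult_mult_mono:
  assumes "le x u" "le y v" "x \<in> M" "u \<in> M" "y \<in> M" "v \<in> M" "m \<in> M" "g \<in> G" "h \<in> G"
  shows "le (mult (mult x g m) h y) (mult (mult u g m) h v)"
proof -
  have "le (mult (mult x g m) h y) (mult (mult u g m) h y)"
    using assms by (intro mult_mono_left) auto
  moreover have "le (mult (mult u g m) h y) (mult (mult u g m) h v)"
    using assms by (intro mult_mono_right) auto
  ultimately show ?thesis
    using assms trans_le mult_closed by meson
qed

lemma square_nonempty: "{a} \<cdot> {a} \<noteq> {}"
  using G_nonempty unfolding gprod_def by blast

lemma gmult_closed: "A \<subseteq> M \<Longrightarrow> B \<subseteq> M \<Longrightarrow> A \<cdot> B \<subseteq> M"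
  unfolding gprod_def using mult_closed by blast

lemma gmult_assoc: "A \<subseteq> M \<Longrightarrow> B \<subseteq> M \<Longrightarrow> C \<subseteq> M \<Longrightarrow> A \<cdot> B \<cdot> C = A \<cdot> (B \<cdot> C)"
proof (intro equalityI subsetI)
  fix x assume "x \<in> A \<cdot> B \<cdot> C" and "A \<subseteq> M" "B \<subseteq> M" "C \<subseteq> M"
  then obtain a g b h c where "a \<in> A" "b \<in> B" "c \<in> C" "g \<in> G" "h \<in> G"
    and "x = mult a g (mult b h c)"
    by (auto simp: mem_gprod subset_iff)
  then show "x \<in> A \<cdot> (B \<cdot> C)" unfolding gprod_def by blast
next
  fix x assume "x \<in> A \<cdot> (B \<cdot> C)" and "A \<subseteq> M" "B \<subseteq> M" "C \<subseteq> M"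
  then obtain a g b h c where "a \<in> A" "b \<in> B" "c \<in> C" "g \<in> G" "h \<in> G"
    and "x = mult (mult a g b) h c"
    by (auto simp: mem_gprod subset_iff)
  then show "x \<in> A \<cdot> B \<cdot> C" unfolding gprod_def by blast
qed

lemma down_subset: "(A] \<subseteq> M"
  unfolding down_def by blast

lemma subset_down: "A \<subseteq> M \<Longrightarrow> A \<subseteq> (A]"
  unfolding down_def using refl_le by blast

lemma down_down:
  assumes "A \<subseteq> M"
  shows "((A]] = (A]"
proof
  show "((A]] \<subseteq> (A]"
    using assms trans_le unfolding down_def by blast
  show "(A] \<subseteq> ((A]]"
    by (rule subset_down[OF down_subset])
qed

lemma gmult_down: "A \<subseteq> M \<Longrightarrow> B \<subseteq> M \<Longrightarrow> (A] \<cdot> (B] \<subseteq> (A \<cdot> B]"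
proof
  fix x assume "A \<subseteq> M" "B \<subseteq> M" and "x \<in> (A] \<cdot> (B]"
  then obtain y g z a b where x: "x = mult y g z" and g: "g \<in> G"
    and ab: "a \<in> A" "b \<in> B" and le: "le y a" "le z b"
    and M: "y \<in> M" "z \<in> M" "a \<in> M" "b \<in> M"
    unfolding gprod_def down_def by (auto simp: subset_iff)
  have "le (mult y g z) (mult a g z)" "le (mult a g z) (mult a g b)"
    using le M g by (simp_all add: mult_mono_left mult_mono_right)
  then have "le x (mult a g b)"
    unfolding x by (rule trans_le) (use M g in simp_all)
  moreover have "mult a g b \<in> A \<cdot> B"
    unfolding mem_gprod using g ab by blast
  ultimately show "x \<in> (A \<cdot> B]"
    unfolding mem_down using x g M by auto
qed

lemma gmult_M_gmult_down: "S \<subseteq> M \<Longrightarrow> (S] \<cdot> M \<cdot> (S] \<subseteq> (S \<cdot> M \<cdot> S]"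
proof -
  assume S: "S \<subseteq> M"
  have "(S] \<cdot> M \<cdot> (S] \<subseteq> (S] \<cdot> (M] \<cdot> (S]"
    by (intro gprod_mono order_refl subset_down)
  also have "\<dots> \<subseteq> (S \<cdot> M] \<cdot> (S]"
    using S by (intro gprod_mono order_refl gmult_down) simp_all
  also have "\<dots> \<subseteq> (S \<cdot> M \<cdot> S]"
    using S by (intro gmult_down gmult_closed) simp_all
  finally show ?thesis .
qed

lemma bi_ideal_iff:
  "bi_ideal M G mult le B \<longleftrightarrow> B \<noteq> {} \<and> B \<subseteq> M \<and> B \<cdot> M \<cdot> B \<subseteq> B \<and> (B] \<subseteq> B"
  unfolding bi_ideal_def down_def by blast

lemma Un_gmult_M_gmult_closed:
  assumes "A \<subseteq> M"
  shows "(A \<union> A \<cdot> M \<cdot> A) \<cdot> M \<cdot> (A \<union> A \<cdot> M \<cdot> A) \<subseteq> A \<union> A \<cdot> M \<cdot> A"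
    (is "?S \<cdot> M \<cdot> ?S \<subseteq> ?S")
proof -
  have AM: "A \<cdot> M \<subseteq> M" and MA: "M \<cdot> A \<subseteq> M"
    using assms by (simp_all add: gmult_closed)
  have "A \<cdot> M \<cdot> A \<cdot> M = A \<cdot> (M \<cdot> A \<cdot> M)"
    using assms AM MA by (simp add: gmult_assoc)
  also have "\<dots> \<subseteq> A \<cdot> M"
    using assms MA by (intro gprod_mono order_refl gmult_closed) simp_all
  finally have SM: "?S \<cdot> M \<subseteq> A \<cdot> M"
    by (simp add: gprod_Un_left)
  have "M \<cdot> (A \<cdot> M \<cdot> A) = M \<cdot> (A \<cdot> M) \<cdot> A"
    using assms AM by (simp add: gmult_assoc)
  also have "\<dots> \<subseteq> M \<cdot> A"
    using assms AM by (intro gprod_mono order_refl gmult_closed) simp_all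
  finally have MS: "M \<cdot> ?S \<subseteq> M \<cdot> A"
    by (simp add: gprod_Un_right)
  have "?S \<cdot> M \<cdot> ?S \<subseteq> A \<cdot> M \<cdot> ?S"
    using SM by (rule gprod_mono) simp
  also have "\<dots> = A \<cdot> (M \<cdot> ?S)"
    using assms AM by (simp add: gmult_assoc gmult_closed)
  also have "\<dots> \<subseteq> A \<cdot> (M \<cdot> A)"
    using MS by (rule gprod_mono[OF order_refl])
  also have "\<dots> = A \<cdot> M \<cdot> A"
    using assms by (simp add: gmult_assoc)
  finally show ?thesis
    by blast
qed

lemma bi_ideal_down:
  assumes "A \<noteq> {}" "A \<subseteq> M"
  shows "bi_ideal M G mult le (A \<union> A \<cdot> M \<cdot> A]"
proof -
  let ?S = "A \<union> A \<cdot> M \<cdot> A"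
  have S: "?S \<subseteq> M"
    using assms(2) by (simp add: gmult_closed)
  have "(?S] \<cdot> M \<cdot> (?S] \<subseteq> (?S \<cdot> M \<cdot> ?S]"
    using S by (rule gmult_M_gmult_down)
  also have "\<dots> \<subseteq> (?S]"
    using Un_gmult_M_gmult_closed[OF assms(2)] by (rule down_mono)
  finally have "(?S] \<cdot> M \<cdot> (?S] \<subseteq> (?S]" .
  moreover have "A \<subseteq> (?S]"
    using S subset_down by blast
  ultimately show ?thesis
    unfolding bi_ideal_iff using assms(1) S down_subset down_down by blast
qed

lemma down_Un_gmult_subset_bi_ideal_gen: "(A \<union> A \<cdot> M \<cdot> A] \<subseteq> \<B> A"
  unfolding bi_ideal_gen_def
proof (rule Inter_greatest)
  fix B assume "B \<in> {B. bi_ideal M G mult le B \<and> A \<subseteq> B}"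
  then have B: "bi_ideal M G mult le B" and "A \<subseteq> B"
    by simp_all
  then have "A \<cdot> M \<cdot> A \<subseteq> B \<cdot> M \<cdot> B"
    by (intro gprod_mono order_refl)
  with B \<open>A \<subseteq> B\<close> have "A \<union> A \<cdot> M \<cdot> A \<subseteq> B"
    unfolding bi_ideal_iff by blast
  then have "(A \<union> A \<cdot> M \<cdot> A] \<subseteq> (B]"
    by (rule down_mono)
  with B show "(A \<union> A \<cdot> M \<cdot> A] \<subseteq> B"
    unfolding bi_ideal_iff by blast
qed

lemma bi_ideal_gen_eq:
  assumes "A \<noteq> {}" "A \<subseteq> M"
  shows "\<B> A = (A \<union> A \<cdot> M \<cdot> A]"
proof
  have "A \<union> A \<cdot> M \<cdot> A \<subseteq> M"
    using assms(2) by (simp add: gmult_closed)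
  then have "A \<subseteq> (A \<union> A \<cdot> M \<cdot> A]"
    using subset_down by blast
  then show "\<B> A \<subseteq> (A \<union> A \<cdot> M \<cdot> A]"
    by (rule bi_ideal_gen_least[OF bi_ideal_down[OF assms]])
qed (rule down_Un_gmult_subset_bi_ideal_gen)

lemma bi_ideal_bi_ideal_gen: "A \<noteq> {} \<Longrightarrow> A \<subseteq> M \<Longrightarrow> bi_ideal M G mult le (\<B> A)"
  by (simp add: bi_ideal_gen_eq bi_ideal_down)

lemma down_subset_bi_ideal_gen: "(A] \<subseteq> \<B> A"
  by (rule order_trans[OF down_mono down_Un_gmult_subset_bi_ideal_gen]) blast

lemma down_gmult_M_subset_bi_ideal_gen: "(A \<cdot> M \<cdot> A] \<subseteq> \<B> A"
  by (rule order_trans[OF down_mono down_Un_gmult_subset_bi_ideal_gen]) blast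

lemma gmult_M_subset_bi_ideal_gen: "A \<subseteq> M \<Longrightarrow> A \<cdot> M \<cdot> A \<subseteq> \<B> A"
  by (rule order_trans[OF subset_down down_gmult_M_subset_bi_ideal_gen]) (simp add: gmult_closed)

definition completely_regular_at :: "'a \<Rightarrow> bool" where
  "completely_regular_at a \<longleftrightarrow>
     a \<in> ({a} \<cdot> M \<cdot> {a}] \<and> a \<in> (M \<cdot> {a} \<cdot> {a}] \<and> a \<in> ({a} \<cdot> {a} \<cdot> M]"

lemma completely_regular_iff:
  "completely_regular M G mult le \<longleftrightarrow> (\<forall>a\<in>M. completely_regular_at a)"
  unfolding completely_regular_def regular_def left_regular_def right_regular_def
    completely_regular_at_def by blast

lemma mem_down_gprod_gprodI:
  "x \<in> M \<Longrightarrow> a \<in> A \<Longrightarrow> b \<in> B \<Longrightarrow> c \<in> C \<Longrightarrow> g \<in> G \<Longrightarrow> h \<in> G \<Longrightarrow>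
     le x (mult (mult a g b) h c) \<Longrightarrow> x \<in> (A \<cdot> B \<cdot> C]"
  unfolding mem_down_gprod_gprod by blast

lemma square_subset_bi_ideal_gen:
  assumes a: "a \<in> M" and regular: "a \<in> ({a} \<cdot> M \<cdot> {a}]"
  shows "{a} \<cdot> {a} \<subseteq> \<B> {a}"
proof
  obtain g1 x h1 where reg: "g1 \<in> G" "h1 \<in> G" "x \<in> M" "le a (mult (mult a g1 x) h1 a)"
    using regular unfolding mem_down_gprod_gprod by blast
  fix u assume "u \<in> {a} \<cdot> {a}"
  then obtain g where g: "g \<in> G" "u = mult a g a"
    unfolding mem_gprod by blast
  have "le u (mult (mult (mult a g1 x) h1 a) g a)"
    unfolding g(2) by (rule mult_mono_left) (use g reg a in simp_all)
  then have le: "le u (mult (mult a g1 (mult x h1 a)) g a)"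
    using g reg a by simp
  have "u \<in> ({a} \<cdot> M \<cdot> {a}]"
    by (rule mem_down_gprod_gprodI[OF _ _ _ _ _ _ le]) (use g reg a in simp_all)
  then show "u \<in> \<B> {a}"
    using down_gmult_M_subset_bi_ideal_gen by blast
qed

lemma mem_down_sandwich_if_completely_regular_at:
  assumes a: "a \<in> M" and "completely_regular_at a"
  shows "a \<in> ({a} \<cdot> {a} \<cdot> M \<cdot> {a} \<cdot> {a}]"
proof -
  obtain g1 x h1 where reg: "g1 \<in> G" "h1 \<in> G" "x \<in> M" "le a (mult (mult a g1 x) h1 a)"
    using assms unfolding completely_regular_at_def mem_down_gprod_gprod by blast
  obtain g2 y h2 where left: "g2 \<in> G" "h2 \<in> G" "y \<in> M" "le a (mult (mult y g2 a) h2 a)"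
    using assms unfolding completely_regular_at_def mem_down_gprod_gprod by blast
  obtain g3 z h3 where right: "g3 \<in> G" "h3 \<in> G" "z \<in> M" "le a (mult (mult a g3 a) h3 z)"
    using assms unfolding completely_regular_at_def mem_down_gprod_gprod by blast
  let ?w = "mult (mult z g1 x) h1 y"
  have w: "?w \<in> M"
    using reg left right by simp
  have "le (mult (mult a g1 x) h1 a)
      (mult (mult (mult (mult a g3 a) h3 z) g1 x) h1 (mult (mult y g2 a) h2 a))"
    using reg left right a by (intro mult_mult_mono) simp_all
  also have "\<dots> = mult (mult (mult (mult a g3 a) h3 ?w) g2 a) h2 a"
    using reg left right a by simp
  finally have le: "le a (mult (mult (mult (mult a g3 a) h3 ?w) g2 a) h2 a)"
    using reg left right a w trans_le mult_closed by meson
  have "mult (mult a g3 a) h3 ?w \<in> {a} \<cdot> {a} \<cdot> M"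
    unfolding gprod_def using right w by blast
  then show ?thesis
    by (rule mem_down_gprod_gprodI[OF a _ _ _ _ _ le]) (use left in simp_all)
qed

lemma completely_regular_at_imp_bi_ideal_gen_eq:
  assumes a: "a \<in> M" and "completely_regular_at a"
  shows "\<B> {a} = \<B> ({a} \<cdot> {a}) \<and> \<B> ({a} \<cdot> {a}) = \<B> ({a} \<cdot> {a} \<cdot> M \<cdot> {a} \<cdot> {a})"
proof -
  let ?A = "{a} \<cdot> {a}"
  let ?T = "{a} \<cdot> {a} \<cdot> M \<cdot> {a} \<cdot> {a}"
  have A: "?A \<subseteq> M" "?A \<noteq> {}"
    using a square_nonempty by (simp_all add: gmult_closed)
  have T: "?T = ?A \<cdot> M \<cdot> ?A" "?T \<subseteq> M"
    using a by (simp_all add: gmult_assoc gmult_closed)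
  have "a \<in> (?T]"
    using assms by (rule mem_down_sandwich_if_completely_regular_at)
  then have "a \<in> \<B> ?T" "?T \<noteq> {}"
    using down_subset_bi_ideal_gen by (blast, auto simp: mem_down)
  then have "\<B> {a} \<subseteq> \<B> ?T"
    using T(2) by (intro bi_ideal_gen_least bi_ideal_bi_ideal_gen) simp_all
  moreover have "\<B> ?T \<subseteq> \<B> ?A"
    using A T gmult_M_subset_bi_ideal_gen
    by (intro bi_ideal_gen_least bi_ideal_bi_ideal_gen) simp_all
  moreover have "\<B> ?A \<subseteq> \<B> {a}"
    using a assms(2) square_subset_bi_ideal_gen unfolding completely_regular_at_def
    by (intro bi_ideal_gen_least bi_ideal_bi_ideal_gen) simp_all
  ultimately show ?thesis
    by blast
qed

lemma completely_regular_at_if_le_square: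
  assumes a: "a \<in> M" and g: "g \<in> G" "le a (mult a g a)"
  shows "completely_regular_at a"
proof -
  have "le (mult a g a) (mult (mult a g a) g a)"
    using a g by (intro mult_mono_left) simp_all
  then have le: "le a (mult (mult a g a) g a)"
    by (rule trans_le[OF g(2)]) (use a g in simp_all)
  show ?thesis
    unfolding completely_regular_at_def
    using a g by (intro conjI mem_down_gprod_gprodI[OF _ _ _ _ _ _ le]) simp_all
qed

lemma completely_regular_at_if_le_sandwich:
  assumes a: "a \<in> M" and "g \<in> G" "h \<in> G" "k \<in> G" "k' \<in> G" "m \<in> M"
    and "le a (mult (mult (mult a k a) g m) h (mult a k' a))"
  shows "completely_regular_at a"
proof -
  have le: "le a (mult (mult a k (mult a g (mult m h a))) k' a)"
    "le a (mult (mult (mult (mult a k a) g m) h a) k' a)"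
    "le a (mult (mult a k a) g (mult m h (mult a k' a)))"
    using assms by simp_all
  show ?thesis
    unfolding completely_regular_at_def
    using assms by (intro conjI mem_down_gprod_gprodI[OF _ _ _ _ _ _ le(1)]
      mem_down_gprod_gprodI[OF _ _ _ _ _ _ le(2)] mem_down_gprod_gprodI[OF _ _ _ _ _ _ le(3)])
      simp_all
qed

lemma completely_regular_at_if_mem_bi_ideal_gen_square:
  assumes a: "a \<in> M" and "a \<in> \<B> ({a} \<cdot> {a})"
  shows "completely_regular_at a"
proof -
  let ?A = "{a} \<cdot> {a}"
  have "?A \<noteq> {}" "?A \<subseteq> M"
    using a square_nonempty by (simp_all add: gmult_closed)
  then have "\<B> ?A = (?A \<union> ?A \<cdot> M \<cdot> ?A]"
    by (rule bi_ideal_gen_eq)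
  then have "a \<in> (?A \<union> ?A \<cdot> M \<cdot> ?A]"
    using assms(2) by simp
  then obtain u where u: "le a u" "u \<in> ?A \<union> ?A \<cdot> M \<cdot> ?A"
    unfolding mem_down by blast
  from u(2) show ?thesis
  proof
    assume "u \<in> ?A"
    then show ?thesis
      using a u(1) completely_regular_at_if_le_square unfolding mem_gprod by blast
  next
    assume "u \<in> ?A \<cdot> M \<cdot> ?A"
    then show ?thesis
      using a u(1) completely_regular_at_if_le_sandwich unfolding gprod_def by blast
  qed
qed

end

theorem proposition5:
  fixes M :: "'a set" and G :: "'g set"
    and mult :: "'a \<Rightarrow> 'g \<Rightarrow> 'a \<Rightarrow> 'a" and le :: "'a \<Rightarrow> 'a \<Rightarrow> bool"
  assumes "po_gamma_semigroup M G mult le"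
  shows "(completely_regular M G mult le
            \<longleftrightarrow> (\<forall>a\<in>M. bi_ideal_gen M G mult le {a}
                          = bi_ideal_gen M G mult le (gprod G mult {a} {a})
                       \<and> bi_ideal_gen M G mult le (gprod G mult {a} {a})
                          = bi_ideal_gen M G mult le
                              (gprod G mult (gprod G mult (gprod G mult (gprod G mult {a} {a}) M) {a}) {a})))
       \<and> (completely_regular M G mult le
            \<longleftrightarrow> (\<forall>a\<in>M. bi_ideal_gen M G mult le {a}
                          = bi_ideal_gen M G mult le (gprod G mult {a} {a})))"
proof -
  interpret po_gamma_semigroup_on M G mult le
    using assms by unfold_locales
  have "a \<in> \<B> {a}" for a
    by (rule subsetD[OF subset_bi_ideal_gen]) simp
  then show ?thesis
    unfolding completely_regular_iff
    using completely_regular_at_imp_bi_ideal_gen_eq completely_regular_at_if_mem_bi_ideal_gen_square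
    by blast
qed

end
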